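(* Let $1\le m<T$ and $\sigma_1\ge\sigma_2\ge\dots\ge\sigma_m>0$, $\boldsymbol{\Sigma}=\operatorname{diag}(\sigma_1,\dots,\sigma_m)$, and $S=S^{(m,T)}_{\boldsymbol{\Sigma}^2}$. Then for every $\mathbf{S}\in S$ and every tangent vector $\boldsymbol{\Delta}\in T_{\mathbf{S}}S$ with $g(\boldsymbol{\Delta},\boldsymbol{\Delta})=1$, one has $|\mathbf{II}_{\mathbf{S}}(\boldsymbol{\Delta},\boldsymbol{\Delta})|\le 1/\sigma_m$, and equality is attained for some unit tangent vector; hence $$\max_{\mathbf{S}\in S,\ \boldsymbol{\Delta}\in T_{\mathbf{S}}S,\ g(\boldsymbol{\Delta},\boldsymbol{\Delta})=1}|\mathbf{II}_{\mathbf{S}}(\boldsymbol{\Delta},\boldsymbol{\Delta})|=\frac1{\sigma_m}.$$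
   Context: $S_{\mathbf{A}}^{(m,T)}=\{\mathbf{X}\in\mathbb{C}^{m\times T}:\mathbf{X}\mathbf{X}^H=\mathbf{A}\}$, viewed as a real embedded submanifold of $\mathbb{C}^{m\times T}\cong\mathbb{R}^{2mT}$ with the Euclidean induced metric $g(\boldsymbol{\Delta}_1,\boldsymbol{\Delta}_2)=\Re\operatorname{tr}(\boldsymbol{\Delta}_1\boldsymbol{\Delta}_2^H)$. $\mathbf{II}_{\mathbf{S}}$ is the (vector-valued) second fundamental form of this embedding at $\mathbf{S}$, and $|\cdot|$ is the Frobenius norm. *)

theory Defs
  imports "HOL-Analysis.Analysis"
begin

text \<open>Complex m x T matrices are modelled as complex^'T^'m; this type is a
 euclidean_space whose inner product is Re tr(D1 D2^H) and whose norm is the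
 Frobenius norm.\<close>

definition conj_transpose :: "complex^'c^'r \<Rightarrow> complex^'r^'c" where
  "conj_transpose X = (\<chi> i j. cnj (X $ j $ i))"

definition diag_mat :: "('r \<Rightarrow> complex) \<Rightarrow> complex^'r^'r" where
  "diag_mat d = (\<chi> i j. if i = j then d i else 0)"

definition gram_level_set :: "complex^'r^'r \<Rightarrow> (complex^'c^'r) set" where
  "gram_level_set A = {X. X ** conj_transpose X = A}"

definition tangent_space :: "'a::euclidean_space set \<Rightarrow> 'a \<Rightarrow> 'a set" where
  "tangent_space M p = {v. \<exists>\<gamma> e. e > 0 \<and> \<gamma> 0 = p \<and> (\<forall>t\<in>ball 0 e. \<gamma> t \<in> M) \<and>
       (\<gamma> has_vector_derivative v) (at 0)}"

definition normal_part :: "'a::euclidean_space set \<Rightarrow> 'a \<Rightarrow> 'a" where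
  "normal_part V x = (THE w. (\<forall>v\<in>V. inner w v = 0) \<and> x - w \<in> V)"

definition second_fundamental_form :: "'a::euclidean_space set \<Rightarrow> 'a \<Rightarrow> 'a \<Rightarrow> 'a" where
  "second_fundamental_form M p v = (SOME w. \<exists>\<gamma> \<gamma>' a e. e > 0 \<and> \<gamma> 0 = p \<and>
       (\<forall>t\<in>ball 0 e. \<gamma> t \<in> M \<and> (\<gamma> has_vector_derivative \<gamma>' t) (at t)) \<and>
       \<gamma>' 0 = v \<and> (\<gamma>' has_vector_derivative a) (at 0) \<and>
       w = normal_part (tangent_space M p) a)"

end

theory Submission
  imports Defs
begin

(* Writing <x, y> for the Hermitian product of rows, S lies in M iff <S_i, S_j> = sigma_i^2 if i = j
   and 0 otherwise. Differentiating along a curve shows that tangent vectors D satisfy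
   <D_i, S_j> + <S_i, D_j> = 0; conversely such a D is the velocity of t |-> (exp (t K) S_i)_i for
   a skew-Hermitian K with K S_i = D_i, so these D form the tangent space. Differentiating twice,
   the acceleration a of a curve with velocity D satisfies <a_i, S_j> + 2 <D_i, D_j> + <S_i, a_j> = 0.
   The normal part w of a has its rows in the row span of S and satisfies
   sigma_i^2 <w_i, S_j> = sigma_j^2 conj <w_j, S_i>, and these facts pin down
     |II_S(D, D)|^2 = sum_ij 4 |<D_i, D_j>|^2 sigma_j^2 / (sigma_i^2 + sigma_j^2)^2.
   As 4 sigma_j^2 <= (sigma_i^2 + sigma_j^2)^2 / sigma_m^2 and |<D_i, D_j>| <= |D_i| |D_j|, this is
   at most |D|^4 / sigma_m^2, with equality when the only nonzero row of D is the m-th one and it is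
   orthogonal to all rows of S; such a row exists because m < T. *)

lemma bounded_linear_vec_lambda:
  assumes "\<And>i. bounded_linear (f i)"
  shows "bounded_linear (\<lambda>x. (\<chi> i. f i x) :: 'b::real_normed_vector^'n::finite)"
proof -
  have "\<forall>i. \<exists>K. \<forall>x. norm (f i x) \<le> norm x * K"
    using bounded_linear.bounded[OF assms] by blast
  then obtain K where K: "\<And>i x. norm (f i x) \<le> norm x * K i"
    by metis
  show ?thesis
  proof (rule bounded_linear_intro[where K="\<Sum>i\<in>UNIV. K i"])
    fix x y and r :: real
    show "(\<chi> i. f i (x + y)) = (\<chi> i. f i x) + (\<chi> i. f i y)"
      by (simp add: vec_eq_iff real_vector.linear_add[OF bounded_linear.linear[OF assms]])
    show "(\<chi> i. f i (r *\<^sub>R x)) = r *\<^sub>R (\<chi> i. f i x)"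
      by (simp add: vec_eq_iff real_vector.linear_scale[OF bounded_linear.linear[OF assms]])
    have "norm (\<chi> i. f i x) \<le> (\<Sum>i\<in>UNIV. norm (f i x))"
      unfolding norm_vec_def by (rule order_trans[OF L2_set_le_sum]) auto
    also have "\<dots> \<le> norm x * (\<Sum>i\<in>UNIV. K i)"
      unfolding sum_distrib_left by (intro sum_mono K)
    finally show "norm (\<chi> i. f i x) \<le> norm x * (\<Sum>i\<in>UNIV. K i)" .
  qed
qed

lemma has_vector_derivative_eq_0_if_locally_constant:
  assumes "(f has_vector_derivative f') (at t)" "open U" "t \<in> U" "\<And>s. s \<in> U \<Longrightarrow> f s = c"
  shows "f' = 0"
proof -
  have "(f has_vector_derivative 0) (at t)"
    using has_vector_derivative_transform_within_open[OF has_vector_derivative_const assms(2,3)] assms(4)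
    by metis
  with assms(1) show ?thesis
    using vector_derivative_unique_at by blast
qed

lemma normal_part_decomposition:
  fixes V :: "'a::euclidean_space set"
  assumes "subspace V"
  shows "\<forall>v\<in>V. inner (normal_part V x) v = 0" and "x - normal_part V x \<in> V"
proof -
  let ?P = "\<lambda>w. (\<forall>v\<in>V. inner w v = 0) \<and> x - w \<in> V"
  obtain y z where "y \<in> span V" "\<And>w. w \<in> span V \<Longrightarrow> orthogonal z w" "x = y + z"
    using orthogonal_subspace_decomp_exists by blast
  moreover have "span V = V" using assms by simp
  ultimately have "?P z" by (auto simp: orthogonal_def)
  moreover have "w1 = w2" if "?P w1" "?P w2" for w1 w2
  proof -
    have "w1 - w2 = (x - w2) - (x - w1)" by simp
    also have "\<dots> \<in> V" using that assms by (metis subspace_diff)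
    finally have "inner (w1 - w2) (w1 - w2) = 0"
      using that by (simp add: inner_diff_left)
    then show ?thesis by simp
  qed
  ultimately have "?P (normal_part V x)"
    unfolding normal_part_def by (intro theI[of ?P z]) auto
  then show "\<forall>v\<in>V. inner (normal_part V x) v = 0" and "x - normal_part V x \<in> V"
    by auto
qed

lemma norm_axis: "norm (axis k x) = norm (x :: 'a::real_inner)"
  by (simp add: norm_eq_sqrt_inner inner_axis_axis)

section \<open>Bounded endomorphisms and their exponential\<close>

text \<open>The exponential needs a Banach algebra, which \<open>blinfun\<close> is not an instance of, so bounded
  endomorphisms get a type copy with composition as product.\<close>

typedef (overloaded) 'a endo = "UNIV :: ('a::euclidean_space \<Rightarrow>\<^sub>L 'a) set" by simp

setup_lifting type_definition_endo

instantiation endo :: (euclidean_space) real_normed_algebra_1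
begin
lift_definition zero_endo :: "'a endo" is 0 .
lift_definition one_endo :: "'a endo" is id_blinfun .
lift_definition plus_endo :: "'a endo \<Rightarrow> 'a endo \<Rightarrow> 'a endo" is "(+)" .
lift_definition minus_endo :: "'a endo \<Rightarrow> 'a endo \<Rightarrow> 'a endo" is "(-)" .
lift_definition uminus_endo :: "'a endo \<Rightarrow> 'a endo" is uminus .
lift_definition scaleR_endo :: "real \<Rightarrow> 'a endo \<Rightarrow> 'a endo" is scaleR .
lift_definition times_endo :: "'a endo \<Rightarrow> 'a endo \<Rightarrow> 'a endo" is "(o\<^sub>L)" .
lift_definition norm_endo :: "'a endo \<Rightarrow> real" is norm .
definition dist_endo :: "'a endo \<Rightarrow> 'a endo \<Rightarrow> real" where "dist_endo a b = norm (a - b)"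
definition sgn_endo :: "'a endo \<Rightarrow> 'a endo" where "sgn_endo x = scaleR (inverse (norm x)) x"
definition uniformity_endo :: "('a endo \<times> 'a endo) filter" where
  "uniformity_endo = (INF e\<in>{0<..}. principal {(x, y). dist x y < e})"
definition open_endo :: "'a endo set \<Rightarrow> bool" where
  "open_endo S = (\<forall>x\<in>S. \<forall>\<^sub>F (x', y) in uniformity. x' = x \<longrightarrow> y \<in> S)"
instance
proof
  show "(0::'a endo) \<noteq> 1"
  proof
    assume "(0::'a endo) = 1"
    then have "norm (0::'a endo) = norm (1::'a endo)" by simp
    then show False by transfer simp
  qed
qed (unfold dist_endo_def open_endo_def sgn_endo_def uniformity_endo_def,
     (rule refl | (transfer, force simp: algebra_simps norm_triangle_ineq norm_blinfun_compose
       intro!: blinfun_eqI simp: blinfun.bilinear_simps))+)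
end

instance endo :: (euclidean_space) banach
proof
  fix X :: "nat \<Rightarrow> 'a endo"
  assume "Cauchy X"
  have dist_Rep: "dist (Rep_endo a) (Rep_endo b) = dist a b" for a b :: "'a endo"
    by (simp add: dist_endo_def dist_norm norm_endo.rep_eq minus_endo.rep_eq)
  have "Cauchy (\<lambda>n. Rep_endo (X n))"
    using \<open>Cauchy X\<close> unfolding Cauchy_def dist_Rep .
  then obtain L where "(\<lambda>n. Rep_endo (X n)) \<longlonglongrightarrow> L"
    using convergent_eq_Cauchy convergent_def by blast
  then have "X \<longlonglongrightarrow> Abs_endo L"
    unfolding LIMSEQ_def by (metis dist_Rep Abs_endo_inverse UNIV_I)
  then show "convergent X" by (auto simp: convergent_def)
qed

definition endo_apply :: "'a::euclidean_space endo \<Rightarrow> 'a \<Rightarrow> 'a" where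
  "endo_apply e = blinfun_apply (Rep_endo e)"

lemma endo_apply_mult: "endo_apply (a * b) x = endo_apply a (endo_apply b x)"
  by (simp add: endo_apply_def times_endo.rep_eq)

lemma endo_apply_one [simp]: "endo_apply 1 x = x"
  by (simp add: endo_apply_def one_endo.rep_eq)

lemma endo_apply_Abs_endo: "bounded_linear f \<Longrightarrow> endo_apply (Abs_endo (Blinfun f)) = f"
  by (simp add: endo_apply_def Abs_endo_inverse bounded_linear_Blinfun_apply)

lemma bounded_linear_endo_apply: "bounded_linear (\<lambda>e. endo_apply e x)"
proof (rule bounded_linear_intro[where K="norm x"])
  fix e f :: "'a endo" and r :: real
  show "endo_apply (e + f) x = endo_apply e x + endo_apply f x"
    by (simp add: endo_apply_def plus_endo.rep_eq blinfun.add_left)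
  show "endo_apply (r *\<^sub>R e) x = r *\<^sub>R endo_apply e x"
    by (simp add: endo_apply_def scaleR_endo.rep_eq blinfun.scaleR_left)
  show "norm (endo_apply e x) \<le> norm e * norm x"
    by (simp add: endo_apply_def norm_endo.rep_eq norm_blinfun)
qed

lemma exp_endo_preserves_form:
  fixes K :: "'a::euclidean_space endo" and b :: "'a \<Rightarrow> 'a \<Rightarrow> 'b::real_normed_vector"
  assumes b: "bounded_bilinear b"
    and skew: "\<And>x y. b (endo_apply K x) y + b x (endo_apply K y) = 0"
  shows "b (endo_apply (exp (t *\<^sub>R K)) x) (endo_apply (exp (t *\<^sub>R K)) y) = b x y"
proof -
  define f where "f s = b (endo_apply (exp (s *\<^sub>R K)) x) (endo_apply (exp (s *\<^sub>R K)) y)" for s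
  have flow: "((\<lambda>s. endo_apply (exp (s *\<^sub>R K)) z) has_vector_derivative
      endo_apply K (endo_apply (exp (s *\<^sub>R K)) z)) (at s)" for z s
    using bounded_linear.has_vector_derivative[OF bounded_linear_endo_apply
        exp_scaleR_has_vector_derivative_left[of K s]]
    by (simp add: endo_apply_mult)
  have "(f has_derivative (\<lambda>h. 0)) (at s within UNIV)" for s
    using bounded_bilinear.has_vector_derivative[OF b flow[of x] flow[of y]] skew
    unfolding f_def by (simp add: has_vector_derivative_def add.commute)
  then obtain c where "\<forall>s\<in>UNIV. f s = c"
    using has_derivative_zero_constant[OF convex_UNIV] by metis
  then have "f t = f 0" by simp
  then show ?thesis by (simp add: f_def)
qed

section \<open>The Hermitian product on \<open>complex^'n\<close>\<close>

definition cinner :: "complex^'n::finite \<Rightarrow> complex^'n \<Rightarrow> complex" where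
  "cinner x y = (\<Sum>\<tau>\<in>UNIV. x$\<tau> * cnj (y$\<tau>))"

lemma cinner_add_left: "cinner (x + y) z = cinner x z + cinner y z"
  by (simp add: cinner_def distrib_right sum.distrib)

lemma cinner_add_right: "cinner x (y + z) = cinner x y + cinner x z"
  by (simp add: cinner_def distrib_left sum.distrib)

lemma cinner_smult_left [simp]: "cinner (c *s x) y = c * cinner x y"
  by (simp add: cinner_def sum_distrib_left mult.assoc)

lemma cinner_smult_right [simp]: "cinner x (c *s y) = cnj c * cinner x y"
  by (simp add: cinner_def sum_distrib_left algebra_simps)

lemma cnj_cinner [simp]: "cnj (cinner x y) = cinner y x"
  by (simp add: cinner_def mult.commute)

lemma scaleR_vec_complex: "r *\<^sub>R x = complex_of_real r *s (x :: complex^'n)"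
  unfolding scaleR_vec_def vector_scalar_mult_def by (simp add: scaleR_conv_of_real)

lemma inner_conv_cinner: "inner x y = Re (cinner x y)"
  by (simp add: cinner_def inner_vec_def inner_complex_def)

lemma cinner_self: "cinner x x = of_real ((norm x)\<^sup>2)"
proof -
  have "Im (cinner x x) = 0"
    by (simp add: cinner_def)
  then show ?thesis
    by (simp add: complex_eq_iff power2_norm_eq_inner inner_conv_cinner)
qed

lemma norm_cinner_le: "norm (cinner x y) \<le> norm x * norm y"
proof (cases "cinner x y = 0")
  case False
  define u where "u = cinner x y / of_real (norm (cinner x y))"
  have "norm u = 1"
    using False by (simp add: u_def norm_divide)
  then have "norm (u *s y) = norm y"
    by (simp add: norm_vec_def norm_mult)
  have "cinner x (u *s y) = of_real (norm (cinner x y))"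
    using False complex_norm_square[of "cinner x y"]
    by (simp add: u_def field_simps power2_eq_square)
  then have "norm (cinner x y) = inner x (u *s y)"
    by (simp add: inner_conv_cinner)
  also have "\<dots> \<le> norm x * norm (u *s y)"
    by (rule norm_cauchy_schwarz)
  finally show ?thesis
    using \<open>norm (u *s y) = norm y\<close> by simp
qed simp

lemma bounded_bilinear_cinner: "bounded_bilinear cinner"
proof
  fix x x' y y' :: "complex^'n" and r :: real
  show "cinner (x + x') y = cinner x y + cinner x' y" "cinner y (x + x') = cinner y x + cinner y x'"
    by (simp_all add: cinner_add_left cinner_add_right)
  show "cinner (r *\<^sub>R x) y = r *\<^sub>R cinner x y" "cinner x (r *\<^sub>R y) = r *\<^sub>R cinner x y"
    by (simp_all add: scaleR_vec_complex scaleR_conv_of_real)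
  show "\<exists>K. \<forall>x y :: complex^'n. norm (cinner x y) \<le> norm x * norm y * K"
    using norm_cinner_le by (metis mult.right_neutral)
qed

interpretation cinner: bounded_bilinear cinner
  by (rule bounded_bilinear_cinner)

declare cinner.zero_left [simp] cinner.zero_right [simp]

lemma has_vector_derivative_cinner_rows:
  fixes \<gamma> \<eta> :: "real \<Rightarrow> complex^'T::finite^'m::finite"
  assumes "(\<gamma> has_vector_derivative \<gamma>') (at t)" "(\<eta> has_vector_derivative \<eta>') (at t)"
  shows "((\<lambda>s. cinner (\<gamma> s $ i) (\<eta> s $ j)) has_vector_derivative
           cinner (\<gamma> t $ i) (\<eta>' $ j) + cinner (\<gamma>' $ i) (\<eta> t $ j)) (at t)"
  using cinner.has_vector_derivative[OF
      bounded_linear.has_vector_derivative[OF bounded_linear_vec_nth assms(1)]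
      bounded_linear.has_vector_derivative[OF bounded_linear_vec_nth assms(2)]] .

text \<open>Hermitian orthogonality to \<open>v j\<close> is real orthogonality to \<open>v j\<close> and \<open>\<i> *s v j\<close>;
  these span at most \<open>2 CARD('m) < 2 CARD('T)\<close> real dimensions.\<close>

lemma exists_unit_cinner_orthogonal:
  fixes v :: "'m::finite \<Rightarrow> complex^'T::finite"
  assumes "CARD('m) < CARD('T)"
  obtains x where "norm x = 1" "\<And>j. cinner x (v j) = 0"
proof -
  define B where "B = range v \<union> range (\<lambda>j. \<i> *s v j)"
  have "card B \<le> card (range v) + card (range (\<lambda>j. \<i> *s v j))"
    unfolding B_def by (rule card_Un_le)
  also have "\<dots> \<le> 2 * CARD('m)"
    using card_image_le[of UNIV v] card_image_le[of UNIV "\<lambda>j. \<i> *s v j"] by simp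
  finally have "dim B < DIM(complex^'T)"
    using dim_le_card'[of B] assms by (simp add: B_def)
  then obtain x :: "complex^'T" where x: "x \<noteq> 0" "\<And>y. y \<in> span B \<Longrightarrow> orthogonal x y"
    by (rule orthogonal_to_subspace_exists) blast
  have "cinner x (v j) = 0" for j
  proof -
    have "orthogonal x (v j)" "orthogonal x (\<i> *s v j)"
      using x(2)[OF span_base[of "v j" B]] x(2)[OF span_base[of "\<i> *s v j" B]]
      unfolding B_def by auto
    then show ?thesis
      by (simp add: orthogonal_def inner_conv_cinner complex_eq_iff)
  qed
  with x(1) show ?thesis
    by (intro that[of "(1 / norm x) *\<^sub>R x"]) (simp_all add: cinner.scaleR_left)
qed

section \<open>The scaled Stiefel manifold and its tangent spaces\<close>

definition scaled_stiefel :: "('m::finite \<Rightarrow> real) \<Rightarrow> (complex^'T::finite^'m) set" where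
  "scaled_stiefel \<sigma> =
     {X. \<forall>i j. cinner (X$i) (X$j) = (if i = j then complex_of_real ((\<sigma> i)\<^sup>2) else 0)}"

lemma scaled_stiefel_cinner:
  "X \<in> scaled_stiefel \<sigma> \<Longrightarrow> cinner (X$i) (X$j) = (if i = j then complex_of_real ((\<sigma> i)\<^sup>2) else 0)"
  by (simp add: scaled_stiefel_def)

lemma gram_level_set_diag_mat:
  "gram_level_set (diag_mat (\<lambda>i. complex_of_real ((\<sigma> i)\<^sup>2))) = scaled_stiefel \<sigma>"
  by (auto simp: gram_level_set_def scaled_stiefel_def vec_eq_iff diag_mat_def
      matrix_matrix_mult_def conj_transpose_def cinner_def)

lemma scaled_stiefel_nonempty:
  assumes "CARD('m::finite) \<le> CARD('T::finite)"
  shows "\<exists>S :: complex^'T^'m. S \<in> scaled_stiefel \<sigma>"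
proof -
  obtain f :: "'m \<Rightarrow> 'T" where "inj f"
    using card_le_inj[of "UNIV::'m set" "UNIV::'T set"] assms by auto
  have "cinner (axis (f i) 1) (axis (f j) 1) = (if i = j then 1 else 0)" for i j
  proof -
    have "cinner (axis (f i) 1) (axis (f j) 1) =
        (\<Sum>\<tau>\<in>UNIV. if \<tau> = f i then (if f i = f j then 1 else 0) else 0)"
      unfolding cinner_def axis_def by (intro sum.cong) auto
    then show ?thesis
      using \<open>inj f\<close> by (simp add: inj_eq)
  qed
  then have "(\<chi> i. complex_of_real (\<sigma> i) *s axis (f i) 1) \<in> scaled_stiefel \<sigma>"
    by (simp add: scaled_stiefel_def power2_eq_square)
  then show ?thesis ..
qed

text \<open>The kernel of the differential \<open>D \<mapsto> D S\<^sup>H + S D\<^sup>H\<close> of the Gram map at \<open>S\<close>.\<close>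

definition stiefel_tangent :: "complex^'T::finite^'m::finite \<Rightarrow> (complex^'T^'m) set" where
  "stiefel_tangent S = {D. \<forall>i j. cinner (D$i) (S$j) + cinner (S$i) (D$j) = 0}"

lemma subspace_stiefel_tangent: "subspace (stiefel_tangent S)"
proof -
  have "linear (\<lambda>D. cinner (D$i) (S$j) + cinner (S$i) (D$j))" for i j
    by (rule linearI)
      (simp_all add: cinner.add_left cinner.add_right cinner.scaleR_left cinner.scaleR_right
        scaleR_right_distrib)
  then have "subspace {D. cinner (D$i) (S$j) + cinner (S$i) (D$j) = 0}" for i j
    by (rule real_vector.linear_subspace_kernel)
  then have "subspace (\<Inter>i. \<Inter>j. {D. cinner (D$i) (S$j) + cinner (S$i) (D$j) = 0})"
    by (auto intro!: subspace_Inter)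
  then show ?thesis
    by (simp add: stiefel_tangent_def Collect_all_eq)
qed

lemma tangent_space_subset_stiefel_tangent:
  "tangent_space (scaled_stiefel \<sigma>) S \<subseteq> stiefel_tangent S"
proof
  fix D assume "D \<in> tangent_space (scaled_stiefel \<sigma>) S"
  then obtain \<gamma> e where e: "e > 0" and \<gamma>: "\<gamma> 0 = S" "\<And>t. t \<in> ball 0 e \<Longrightarrow> \<gamma> t \<in> scaled_stiefel \<sigma>"
    and D: "(\<gamma> has_vector_derivative D) (at 0)"
    by (auto simp: tangent_space_def)
  have "cinner (\<gamma> 0 $ i) (D $ j) + cinner (D $ i) (\<gamma> 0 $ j) = 0" for i j
    by (rule has_vector_derivative_eq_0_if_locally_constant[where U="ball 0 e"
          and c="if i = j then complex_of_real ((\<sigma> i)\<^sup>2) else 0",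
          OF has_vector_derivative_cinner_rows[OF D D]])
      (use e \<gamma>(2) in \<open>auto simp: scaled_stiefel_cinner\<close>)
  then show "D \<in> stiefel_tangent S"
    by (simp add: stiefel_tangent_def \<gamma>(1) add.commute)
qed

lemma scaled_stiefel_acceleration:
  assumes e: "e > 0"
    and \<gamma>: "\<And>t. t \<in> ball 0 e \<Longrightarrow> \<gamma> t \<in> scaled_stiefel \<sigma> \<and> (\<gamma> has_vector_derivative \<gamma>' t) (at t)"
    and a: "(\<gamma>' has_vector_derivative a) (at 0)"
  shows "cinner (a$i) (\<gamma> 0$j) + 2 * cinner (\<gamma>' 0$i) (\<gamma>' 0$j) + cinner (\<gamma> 0$i) (a$j) = 0"
proof -
  have 0: "0 \<in> ball 0 e"
    using e by simp
  have \<gamma>': "(\<gamma> has_vector_derivative \<gamma>' s) (at s)" if "s \<in> ball 0 e" for s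
    using \<gamma>[OF that] by blast
  have gram: "cinner (\<gamma> s $ i) (\<gamma> s $ j) = (if i = j then complex_of_real ((\<sigma> i)\<^sup>2) else 0)"
    if "s \<in> ball 0 e" for s
    using \<gamma>[OF that] by (simp add: scaled_stiefel_cinner)
  let ?g = "\<lambda>s. cinner (\<gamma> s $ i) (\<gamma>' s $ j) + cinner (\<gamma>' s $ i) (\<gamma> s $ j)"
  have velocity: "?g s = 0" if "s \<in> ball 0 e" for s
    using has_vector_derivative_eq_0_if_locally_constant[OF
        has_vector_derivative_cinner_rows[OF \<gamma>'[OF that] \<gamma>'[OF that]] open_ball that gram] .
  have "(?g has_vector_derivative
      (cinner (\<gamma> 0 $ i) (a $ j) + cinner (\<gamma>' 0 $ i) (\<gamma>' 0 $ j)) +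
      (cinner (\<gamma>' 0 $ i) (\<gamma>' 0 $ j) + cinner (a $ i) (\<gamma> 0 $ j))) (at 0)"
    using has_vector_derivative_add[OF has_vector_derivative_cinner_rows[OF \<gamma>'[OF 0] a]
        has_vector_derivative_cinner_rows[OF a \<gamma>'[OF 0]]] .
  from has_vector_derivative_eq_0_if_locally_constant[OF this open_ball 0 velocity]
  show ?thesis
    by (simp add: algebra_simps)
qed

definition row_transfer ::
    "('m::finite \<Rightarrow> real) \<Rightarrow> complex^'T::finite^'m \<Rightarrow> complex^'T^'m \<Rightarrow> complex^'T \<Rightarrow> complex^'T" where
  "row_transfer \<sigma> S D x = (\<Sum>i\<in>UNIV. (cinner x (S$i) / complex_of_real ((\<sigma> i)\<^sup>2)) *s D$i)"

lemma bounded_linear_row_transfer: "bounded_linear (row_transfer \<sigma> S D)"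
proof -
  have "linear (\<lambda>c::complex. c *s v)" for v :: "complex^'T"
    by (rule linearI) (simp_all add: scaleR_vec_complex scaleR_conv_of_real)
  then have "bounded_linear (\<lambda>c::complex. c *s v)" for v :: "complex^'T"
    by (simp add: linear_conv_bounded_linear)
  moreover have "bounded_linear (\<lambda>x. cinner x u / c)" for u :: "complex^'T" and c
    by (rule bounded_linear_compose[OF bounded_linear_divide cinner.bounded_linear_left])
  ultimately have "bounded_linear (\<lambda>x. (cinner x u / c) *s v)" for u v :: "complex^'T" and c
    by (rule bounded_linear_compose)
  then show ?thesis
    unfolding row_transfer_def[abs_def] by (intro bounded_linear_sum)
qed

lemma cinner_row_transfer_left:
  "cinner (row_transfer \<sigma> S D x) y =
     (\<Sum>i\<in>UNIV. cinner x (S$i) * cinner (D$i) y / complex_of_real ((\<sigma> i)\<^sup>2))"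
  unfolding row_transfer_def by (subst cinner.sum_left) simp

lemma row_transfer_adjoint:
  "cinner (row_transfer \<sigma> S D x) y = cinner x (row_transfer \<sigma> D S y)"
  unfolding cinner_row_transfer_left unfolding row_transfer_def
  by (subst cinner.sum_right) (simp add: mult_ac)

lemma row_transfer_row:
  assumes "S \<in> scaled_stiefel \<sigma>" "\<sigma> l \<noteq> 0"
  shows "row_transfer \<sigma> S D (S$l) = D$l"
proof -
  have "(cinner (S$l) (S$i) / complex_of_real ((\<sigma> i)\<^sup>2)) *s D$i = (if i = l then D$l else 0)" for i
    using assms by (simp add: scaled_stiefel_cinner)
  then show ?thesis
    by (simp add: row_transfer_def)
qed

lemma row_transfer_anticommute:
  assumes "D \<in> stiefel_tangent S"
  shows "row_transfer \<sigma> S S (row_transfer \<sigma> S D y) + row_transfer \<sigma> D S (row_transfer \<sigma> S S y) = 0"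
proof -
  have combine: "row_transfer \<sigma> S S u + row_transfer \<sigma> D S v =
      (\<Sum>j\<in>UNIV. ((cinner u (S$j) + cinner v (D$j)) / complex_of_real ((\<sigma> j)\<^sup>2)) *s S$j)" for u v
    unfolding row_transfer_def sum.distrib[symmetric]
    by (simp only: add_divide_distrib vector_sadd_rdistrib)
  have "cinner (row_transfer \<sigma> S D y) (S$j) + cinner (row_transfer \<sigma> S S y) (D$j) =
      (\<Sum>i\<in>UNIV. cinner y (S$i) * (cinner (D$i) (S$j) + cinner (S$i) (D$j)) /
         complex_of_real ((\<sigma> i)\<^sup>2))" for j
    unfolding cinner_row_transfer_left sum.distrib[symmetric]
    by (simp only: distrib_left add_divide_distrib)
  also have "\<dots> j = 0" for j
    using assms by (simp add: stiefel_tangent_def)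
  finally show ?thesis
    unfolding combine by simp
qed

text \<open>With \<open>A = row_transfer \<sigma> S D\<close> (sending \<open>S$i\<close> to \<open>D$i\<close>), its adjoint
  \<open>A\<^sup>* = row_transfer \<sigma> D S\<close> and the orthogonal projection \<open>P = row_transfer \<sigma> S S\<close>
  onto the rows of \<open>S\<close>, this is \<open>K = A - A\<^sup>* + A\<^sup>* P\<close>; tangency of \<open>D\<close> makes it
  skew-Hermitian.\<close>

definition tangent_generator ::
    "('m::finite \<Rightarrow> real) \<Rightarrow> complex^'T::finite^'m \<Rightarrow> complex^'T^'m \<Rightarrow> complex^'T \<Rightarrow> complex^'T" where
  "tangent_generator \<sigma> S D x =
     row_transfer \<sigma> S D x - row_transfer \<sigma> D S x + row_transfer \<sigma> D S (row_transfer \<sigma> S S x)"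

lemma bounded_linear_tangent_generator: "bounded_linear (tangent_generator \<sigma> S D)"
  unfolding tangent_generator_def[abs_def]
  by (intro bounded_linear_add bounded_linear_sub bounded_linear_row_transfer
      bounded_linear_compose[OF bounded_linear_row_transfer])

lemma tangent_generator_row:
  assumes "S \<in> scaled_stiefel \<sigma>" "\<And>i. \<sigma> i \<noteq> 0"
  shows "tangent_generator \<sigma> S D (S$l) = D$l"
  using assms by (simp add: tangent_generator_def row_transfer_row)

lemma tangent_generator_skew:
  assumes "D \<in> stiefel_tangent S"
  shows "cinner (tangent_generator \<sigma> S D x) y + cinner x (tangent_generator \<sigma> S D y) = 0"
proof -
  have "cinner (tangent_generator \<sigma> S D x) y + cinner x (tangent_generator \<sigma> S D y) =
      cinner x (row_transfer \<sigma> S S (row_transfer \<sigma> S D y) + row_transfer \<sigma> D S (row_transfer \<sigma> S S y))"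
    by (simp add: tangent_generator_def cinner.add_left cinner.diff_left cinner.add_right
        cinner.diff_right row_transfer_adjoint)
  also have "\<dots> = 0"
    using row_transfer_anticommute[OF assms] by simp
  finally show ?thesis .
qed

lemma scaled_stiefel_curve:
  fixes S D :: "complex^'T::finite^'m::finite"
  assumes S: "S \<in> scaled_stiefel \<sigma>" and \<sigma>: "\<And>i. \<sigma> i \<noteq> 0" and D: "D \<in> stiefel_tangent S"
  obtains \<gamma> \<gamma>' a where "\<gamma> 0 = S" "\<gamma>' 0 = D" "\<And>t. \<gamma> t \<in> scaled_stiefel \<sigma>"
    "\<And>t. (\<gamma> has_vector_derivative \<gamma>' t) (at t)" "(\<gamma>' has_vector_derivative a) (at 0)"
proof -
  define K :: "(complex^'T) endo" where "K = Abs_endo (Blinfun (tangent_generator \<sigma> S D))"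
  have K: "endo_apply K = tangent_generator \<sigma> S D"
    unfolding K_def by (rule endo_apply_Abs_endo[OF bounded_linear_tangent_generator])
  define L :: "(complex^'T) endo \<Rightarrow> complex^'T^'m" where "L e = (\<chi> i. endo_apply e (S$i))" for e
  have L: "bounded_linear L"
    unfolding L_def by (intro bounded_linear_vec_lambda bounded_linear_endo_apply)
  define E where "E t = exp (t *\<^sub>R K)" for t
  have E: "(E has_vector_derivative K * E t) (at t)" for t
    unfolding E_def by (rule exp_scaleR_has_vector_derivative_left)
  show ?thesis
  proof (rule that[of "\<lambda>t. L (E t)" "\<lambda>t. L (K * E t)" "L (K * (K * E 0))"])
    show "L (E 0) = S"
      by (simp add: L_def E_def vec_eq_iff)
    show "L (K * E 0) = D"
      by (simp add: L_def E_def vec_eq_iff endo_apply_mult K tangent_generator_row[OF S \<sigma>])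
    show "L (E t) \<in> scaled_stiefel \<sigma>" for t
    proof -
      have "cinner (endo_apply (E t) x) (endo_apply (E t) y) = cinner x y" for x y
        unfolding E_def
        by (rule exp_endo_preserves_form[OF bounded_bilinear_cinner])
          (simp add: K tangent_generator_skew[OF D])
      with S show ?thesis
        unfolding scaled_stiefel_def L_def by simp
    qed
    show "((\<lambda>t. L (E t)) has_vector_derivative L (K * E t)) (at t)" for t
      by (rule bounded_linear.has_vector_derivative[OF L E])
    show "((\<lambda>t. L (K * E t)) has_vector_derivative L (K * (K * E 0))) (at 0)"
      by (rule bounded_linear.has_vector_derivative[OF L has_vector_derivative_mult_right[OF E]])
  qed
qed

lemma tangent_space_scaled_stiefel:
  assumes "S \<in> scaled_stiefel \<sigma>" "\<And>i. \<sigma> i \<noteq> 0"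
  shows "tangent_space (scaled_stiefel \<sigma>) S = stiefel_tangent S"
proof
  show "stiefel_tangent S \<subseteq> tangent_space (scaled_stiefel \<sigma>) S"
  proof
    fix D assume "D \<in> stiefel_tangent S"
    then show "D \<in> tangent_space (scaled_stiefel \<sigma>) S"
    proof (rule scaled_stiefel_curve[OF assms])
      fix \<gamma> \<gamma>' a assume \<gamma>: "\<gamma> 0 = S" "\<gamma>' 0 = D" "\<And>t. \<gamma> t \<in> scaled_stiefel \<sigma>"
        "\<And>t. (\<gamma> has_vector_derivative \<gamma>' t) (at t)" "(\<gamma>' has_vector_derivative a) (at 0)"
      have "(\<gamma> has_vector_derivative D) (at 0)"
        using \<gamma>(4)[of 0] by (simp only: \<gamma>(2))
      with \<gamma>(1,3) show ?thesis
        unfolding tangent_space_def by (intro CollectI exI[of _ \<gamma>] exI[of _ 1]) simp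
    qed
  qed
qed (rule tangent_space_subset_stiefel_tangent)

section \<open>The second fundamental form\<close>

text \<open>If the component \<open>r\<close> of \<open>w$i\<close> orthogonal to all rows of \<open>S\<close> were nonzero,
  \<open>axis i r\<close> would be a tangent vector with \<open>inner w (axis i r) = |r|\<^sup>2 > 0\<close>.\<close>

lemma row_transfer_normal_row:
  fixes S w :: "complex^'T::finite^'m::finite"
  assumes S: "S \<in> scaled_stiefel \<sigma>" and \<sigma>: "\<And>i. \<sigma> i \<noteq> 0"
    and w: "\<forall>v\<in>stiefel_tangent S. inner w v = 0"
  shows "row_transfer \<sigma> S S (w$i) = w$i"
proof -
  define r where "r = w$i - row_transfer \<sigma> S S (w$i)"
  have r_S: "cinner r (S$l) = 0" for l
    by (simp add: r_def cinner.diff_left row_transfer_adjoint row_transfer_row[OF S \<sigma>])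
  then have "cinner (S$l) r = 0" for l
    using cnj_cinner[of r "S$l"] by simp
  with r_S have "axis i r \<in> stiefel_tangent S"
    by (simp add: stiefel_tangent_def axis_def)
  with w have "inner w (axis i r) = 0"
    by blast
  then have "Re (cinner (w$i) r) = 0"
    by (simp add: inner_axis inner_conv_cinner)
  moreover have "row_transfer \<sigma> S S r = 0"
    by (simp add: row_transfer_def r_S)
  have "cinner (w$i) r = cinner r r"
  proof -
    have "cinner (w$i) r = cinner (r + row_transfer \<sigma> S S (w$i)) r"
      by (simp add: r_def)
    also have "\<dots> = cinner r r"
      using \<open>row_transfer \<sigma> S S r = 0\<close> by (simp add: cinner.add_left row_transfer_adjoint)
    finally show ?thesis .
  qed
  ultimately have "r = 0"
    by (simp add: cinner_self)
  then show ?thesis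
    by (simp add: r_def)
qed

lemma normal_cinner_symmetric:
  fixes S w :: "complex^'T::finite^'m::finite"
  assumes S: "S \<in> scaled_stiefel \<sigma>" and w: "\<forall>v\<in>stiefel_tangent S. inner w v = 0"
  shows "complex_of_real ((\<sigma> i)\<^sup>2) * cinner (w$i) (S$j) =
    complex_of_real ((\<sigma> j)\<^sup>2) * cnj (cinner (w$j) (S$i))"
proof -
  define s where "s l = complex_of_real ((\<sigma> l)\<^sup>2)" for l
  define Y where "Y z = axis i ((s i * z) *s S$j) - axis j ((s j * cnj z) *s S$i)" for z
  have "Y z \<in> stiefel_tangent S" for z
    by (auto simp: stiefel_tangent_def Y_def axis_def s_def scaled_stiefel_cinner[OF S]
        cinner.diff_left cinner.diff_right algebra_simps)
  have inner_Y: "inner w (Y z) =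
      Re (cnj z * (s i * cinner (w$i) (S$j) - s j * cnj (cinner (w$j) (S$i))))" for z
    by (simp add: Y_def s_def inner_axis inner_conv_cinner algebra_simps del: cnj_cinner)
  define z where "z = s i * cinner (w$i) (S$j) - s j * cnj (cinner (w$j) (S$i))"
  have "(cmod z)\<^sup>2 = inner w (Y z)"
    unfolding inner_Y z_def[symmetric] by (metis Re_complex_of_real complex_norm_square mult.commute)
  also have "\<dots> = 0"
    using w \<open>Y z \<in> stiefel_tangent S\<close> by blast
  finally show ?thesis
    by (simp add: z_def s_def)
qed

lemma cinner_self_row_transfer:
  "cinner x (row_transfer \<sigma> S S x) =
     (\<Sum>j\<in>UNIV. complex_of_real ((cmod (cinner x (S$j)))\<^sup>2 / (\<sigma> j)\<^sup>2))"
  unfolding row_transfer_def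
  by (subst cinner.sum_right, intro sum.cong refl)
    (simp add: complex_norm_square[unfolded of_real_power] mult.commute del: cnj_cinner)

definition sff_norm_sq :: "('m::finite \<Rightarrow> real) \<Rightarrow> complex^'T::finite^'m \<Rightarrow> real" where
  "sff_norm_sq \<sigma> D = (\<Sum>i\<in>UNIV. \<Sum>j\<in>UNIV.
     4 * (cmod (cinner (D$i) (D$j)))\<^sup>2 * (\<sigma> j)\<^sup>2 / ((\<sigma> i)\<^sup>2 + (\<sigma> j)\<^sup>2)\<^sup>2)"

lemma normal_acceleration_cinner:
  fixes S w a D :: "complex^'T::finite^'m::finite"
  assumes S: "S \<in> scaled_stiefel \<sigma>" and \<sigma>: "\<And>i. \<sigma> i > 0"
    and w: "\<forall>v\<in>stiefel_tangent S. inner w v = 0" and aw: "a - w \<in> stiefel_tangent S"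
    and acc: "\<And>i j. cinner (a$i) (S$j) + 2 * cinner (D$i) (D$j) + cinner (S$i) (a$j) = 0"
  shows "cinner (w$i) (S$j) =
    - 2 * cinner (D$i) (D$j) * complex_of_real ((\<sigma> j)\<^sup>2 / ((\<sigma> i)\<^sup>2 + (\<sigma> j)\<^sup>2))"
proof -
  have "cinner ((a - w)$i) (S$j) + cinner (S$i) ((a - w)$j) = 0"
    using aw by (simp add: stiefel_tangent_def)
  then have "cinner (a$i) (S$j) + cinner (S$i) (a$j) = cinner (w$i) (S$j) + cnj (cinner (w$j) (S$i))"
    by (simp add: cinner.diff_left cinner.diff_right algebra_simps)
  with acc[of i j] have sum: "cinner (w$i) (S$j) + cnj (cinner (w$j) (S$i)) = - 2 * cinner (D$i) (D$j)"
    by algebra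
  have "complex_of_real ((\<sigma> j)\<^sup>2) * cnj (cinner (w$j) (S$i)) =
      complex_of_real ((\<sigma> i)\<^sup>2) * cinner (w$i) (S$j)"
    using normal_cinner_symmetric[OF S w, of j i] by (metis complex_cnj_cnj complex_cnj_complex_of_real complex_cnj_mult)
  with sum have "complex_of_real ((\<sigma> i)\<^sup>2 + (\<sigma> j)\<^sup>2) * cinner (w$i) (S$j) =
      complex_of_real ((\<sigma> j)\<^sup>2) * (- 2 * cinner (D$i) (D$j))"
    unfolding of_real_add by algebra
  moreover have "(\<sigma> i)\<^sup>2 + (\<sigma> j)\<^sup>2 \<noteq> 0"
    using \<sigma>[of i] \<sigma>[of j] by (simp add: add_nonneg_eq_0_iff)
  ultimately show ?thesis
    by (simp add: field_simps flip: of_real_add)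
qed

lemma norm_normal_acceleration:
  fixes S w a D :: "complex^'T::finite^'m::finite"
  assumes S: "S \<in> scaled_stiefel \<sigma>" and \<sigma>: "\<And>i. \<sigma> i > 0"
    and w: "\<forall>v\<in>stiefel_tangent S. inner w v = 0" and aw: "a - w \<in> stiefel_tangent S"
    and acc: "\<And>i j. cinner (a$i) (S$j) + 2 * cinner (D$i) (D$j) + cinner (S$i) (a$j) = 0"
  shows "(norm w)\<^sup>2 = sff_norm_sq \<sigma> D"
proof -
  have \<sigma>0: "\<sigma> i \<noteq> 0" for i
    using \<sigma>[of i] by simp
  have "(cmod (cinner (w$i) (S$j)))\<^sup>2 / (\<sigma> j)\<^sup>2 =
      4 * (cmod (cinner (D$i) (D$j)))\<^sup>2 * (\<sigma> j)\<^sup>2 / ((\<sigma> i)\<^sup>2 + (\<sigma> j)\<^sup>2)\<^sup>2" for i j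
  proof -
    have "(\<sigma> i)\<^sup>2 + (\<sigma> j)\<^sup>2 > 0"
      using \<sigma>[of i] by (simp add: add_pos_nonneg)
    moreover have cmod: "cmod (cinner (w$i) (S$j)) =
        2 * cmod (cinner (D$i) (D$j)) * ((\<sigma> j)\<^sup>2 / ((\<sigma> i)\<^sup>2 + (\<sigma> j)\<^sup>2))"
      unfolding normal_acceleration_cinner[OF S \<sigma> w aw acc] norm_mult norm_minus_cancel norm_of_real
      by simp
    moreover have square_ratio: "(2 * c * (x / y))\<^sup>2 / x = 4 * c\<^sup>2 * x / y\<^sup>2"
      if "x \<noteq> 0" "y \<noteq> 0" for c x y :: real
      using that by (simp add: power2_eq_square field_simps)
    ultimately show ?thesis
      unfolding cmod using \<sigma>0[of j] by (intro square_ratio) auto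
  qed
  moreover have "(norm (w$i))\<^sup>2 = (\<Sum>j\<in>UNIV. (cmod (cinner (w$i) (S$j)))\<^sup>2 / (\<sigma> j)\<^sup>2)" for i
  proof -
    have "complex_of_real ((norm (w$i))\<^sup>2) = cinner (w$i) (row_transfer \<sigma> S S (w$i))"
      by (simp add: row_transfer_normal_row[OF S \<sigma>0 w] cinner_self)
    then have "complex_of_real ((norm (w$i))\<^sup>2) =
        complex_of_real (\<Sum>j\<in>UNIV. (cmod (cinner (w$i) (S$j)))\<^sup>2 / (\<sigma> j)\<^sup>2)"
      by (simp only: cinner_self_row_transfer of_real_sum)
    then show ?thesis
      by (simp only: of_real_eq_iff)
  qed
  moreover have "(norm w)\<^sup>2 = (\<Sum>i\<in>UNIV. (norm (w$i))\<^sup>2)"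
    by (simp add: power2_norm_eq_inner inner_vec_def)
  ultimately show ?thesis
    by (simp add: sff_norm_sq_def)
qed

text \<open>\<open>second_fundamental_form\<close> picks an arbitrary admissible curve, so only what every such
  curve satisfies is usable: its acceleration obeys the twice differentiated Gram condition.\<close>

lemma second_fundamental_form_scaled_stiefel:
  fixes S D :: "complex^'T::finite^'m::finite"
  assumes S: "S \<in> scaled_stiefel \<sigma>" and \<sigma>: "\<And>i. \<sigma> i \<noteq> 0" and D: "D \<in> stiefel_tangent S"
  obtains a where "second_fundamental_form (scaled_stiefel \<sigma>) S D = normal_part (stiefel_tangent S) a"
    "\<And>i j. cinner (a$i) (S$j) + 2 * cinner (D$i) (D$j) + cinner (S$i) (a$j) = 0"
proof -
  note T = tangent_space_scaled_stiefel[OF S \<sigma>]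
  define P where "P w \<longleftrightarrow> (\<exists>\<gamma> \<gamma>' a e. e > 0 \<and> \<gamma> 0 = S \<and>
      (\<forall>t\<in>ball 0 e. \<gamma> t \<in> scaled_stiefel \<sigma> \<and> (\<gamma> has_vector_derivative \<gamma>' t) (at t)) \<and>
      \<gamma>' 0 = D \<and> (\<gamma>' has_vector_derivative a) (at 0) \<and>
      w = normal_part (tangent_space (scaled_stiefel \<sigma>) S) a)" for w
  have "\<exists>w. P w"
  proof (rule scaled_stiefel_curve[OF S \<sigma> D])
    fix \<gamma> \<gamma>' a assume "\<gamma> 0 = S" "\<gamma>' 0 = D" "\<And>t. \<gamma> t \<in> scaled_stiefel \<sigma>"
      "\<And>t. (\<gamma> has_vector_derivative \<gamma>' t) (at t)" "(\<gamma>' has_vector_derivative a) (at 0)"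
    then show "\<exists>w. P w"
      unfolding P_def
      by (intro exI[of _ "normal_part (tangent_space (scaled_stiefel \<sigma>) S) a"] exI[of _ \<gamma>]
          exI[of _ \<gamma>'] exI[of _ a] exI[of _ 1]) auto
  qed
  then have "P (second_fundamental_form (scaled_stiefel \<sigma>) S D)"
    unfolding second_fundamental_form_def P_def[symmetric] by (rule someI_ex)
  then obtain \<gamma> \<gamma>' a e where e: "e > 0" and \<gamma>: "\<gamma> 0 = S" "\<gamma>' 0 = D"
    "\<And>t. t \<in> ball 0 e \<Longrightarrow> \<gamma> t \<in> scaled_stiefel \<sigma> \<and> (\<gamma> has_vector_derivative \<gamma>' t) (at t)"
    and a: "(\<gamma>' has_vector_derivative a) (at 0)"
    and sff: "second_fundamental_form (scaled_stiefel \<sigma>) S D = normal_part (stiefel_tangent S) a"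
    unfolding P_def T by blast
  show ?thesis
  proof (rule that[OF sff])
    show "cinner (a$i) (S$j) + 2 * cinner (D$i) (D$j) + cinner (S$i) (a$j) = 0" for i j
      using scaled_stiefel_acceleration[OF e \<gamma>(3) a] by (simp add: \<gamma>(1,2))
  qed
qed

lemma norm_second_fundamental_form_scaled_stiefel:
  fixes S D :: "complex^'T::finite^'m::finite"
  assumes S: "S \<in> scaled_stiefel \<sigma>" and \<sigma>: "\<And>i. \<sigma> i > 0" and D: "D \<in> stiefel_tangent S"
  shows "(norm (second_fundamental_form (scaled_stiefel \<sigma>) S D))\<^sup>2 = sff_norm_sq \<sigma> D"
proof (rule second_fundamental_form_scaled_stiefel[OF S _ D])
  show "\<sigma> i \<noteq> 0" for i
    using \<sigma>[of i] by simp
  fix a assume sff: "second_fundamental_form (scaled_stiefel \<sigma>) S D = normal_part (stiefel_tangent S) a"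
    and acc: "\<And>i j. cinner (a$i) (S$j) + 2 * cinner (D$i) (D$j) + cinner (S$i) (a$j) = 0"
  show ?thesis
    unfolding sff
    using norm_normal_acceleration[OF S \<sigma> normal_part_decomposition[OF subspace_stiefel_tangent] acc] .
qed

lemma sff_norm_sq_le:
  assumes \<sigma>: "\<And>i. \<sigma> i > 0" and k: "\<And>i. \<sigma> k \<le> \<sigma> i"
  shows "sff_norm_sq \<sigma> D \<le> (norm D)^4 / (\<sigma> k)\<^sup>2"
proof -
  have "4 * (cmod (cinner (D$i) (D$j)))\<^sup>2 * (\<sigma> j)\<^sup>2 / ((\<sigma> i)\<^sup>2 + (\<sigma> j)\<^sup>2)\<^sup>2
      \<le> (norm (D$i))\<^sup>2 * (norm (D$j))\<^sup>2 / (\<sigma> k)\<^sup>2" for i j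
  proof -
    have "4 * (\<sigma> k)\<^sup>2 * (\<sigma> j)\<^sup>2 \<le> ((\<sigma> k)\<^sup>2 + (\<sigma> j)\<^sup>2)\<^sup>2"
      using sum_squares_ge_zero[of "(\<sigma> k)\<^sup>2 - (\<sigma> j)\<^sup>2" 0] by (simp add: power2_eq_square algebra_simps)
    also have "\<dots> \<le> ((\<sigma> i)\<^sup>2 + (\<sigma> j)\<^sup>2)\<^sup>2"
      using k[of i] \<sigma>[of k] by (intro power_mono add_right_mono) auto
    finally have "4 * (\<sigma> j)\<^sup>2 / ((\<sigma> i)\<^sup>2 + (\<sigma> j)\<^sup>2)\<^sup>2 \<le> 1 / (\<sigma> k)\<^sup>2"
      using \<sigma>[of i] \<sigma>[of k] by (simp add: field_simps add_pos_nonneg)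
    moreover have "(cmod (cinner (D$i) (D$j)))\<^sup>2 \<le> (norm (D$i))\<^sup>2 * (norm (D$j))\<^sup>2"
      using power_mono[OF norm_cinner_le norm_ge_zero, of _ _ 2] by (simp add: power_mult_distrib)
    ultimately have "(cmod (cinner (D$i) (D$j)))\<^sup>2 * (4 * (\<sigma> j)\<^sup>2 / ((\<sigma> i)\<^sup>2 + (\<sigma> j)\<^sup>2)\<^sup>2)
        \<le> ((norm (D$i))\<^sup>2 * (norm (D$j))\<^sup>2) * (1 / (\<sigma> k)\<^sup>2)"
      by (intro mult_mono) auto
    then show ?thesis
      by (simp add: mult_ac)
  qed
  then have "sff_norm_sq \<sigma> D \<le> (\<Sum>i\<in>UNIV. \<Sum>j\<in>UNIV. (norm (D$i))\<^sup>2 * (norm (D$j))\<^sup>2 / (\<sigma> k)\<^sup>2)"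
    unfolding sff_norm_sq_def by (intro sum_mono)
  also have "\<dots> = (\<Sum>i\<in>UNIV. (norm (D$i))\<^sup>2)\<^sup>2 / (\<sigma> k)\<^sup>2"
    by (simp add: power2_eq_square sum_product sum_divide_distrib)
  also have "(\<Sum>i\<in>UNIV. (norm (D$i))\<^sup>2) = (norm D)\<^sup>2"
    by (simp add: power2_norm_eq_inner inner_vec_def)
  finally show ?thesis
    by simp
qed

lemma sff_norm_sq_axis:
  assumes "\<sigma> k \<noteq> 0"
  shows "sff_norm_sq \<sigma> (axis k x) = (norm x)^4 / (\<sigma> k)\<^sup>2"
proof -
  have "4 * ((norm x)\<^sup>2)\<^sup>2 * (\<sigma> k)\<^sup>2 / ((\<sigma> k)\<^sup>2 + (\<sigma> k)\<^sup>2)\<^sup>2 = (norm x)^4 / (\<sigma> k)\<^sup>2"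
    using assms by (simp add: field_simps power2_eq_square power4_eq_xxxx)
  then have "4 * (cmod (cinner (axis k x $ i) (axis k x $ j)))\<^sup>2 * (\<sigma> j)\<^sup>2 / ((\<sigma> i)\<^sup>2 + (\<sigma> j)\<^sup>2)\<^sup>2 =
      (if j = k then if i = k then (norm x)^4 / (\<sigma> k)\<^sup>2 else 0 else 0)" for i j
    by (simp add: axis_def cinner_self norm_power)
  then show ?thesis
    by (simp add: sff_norm_sq_def)
qed

lemma axis_in_stiefel_tangent:
  assumes "\<And>j. cinner x (S$j) = 0"
  shows "axis k x \<in> stiefel_tangent S"
proof -
  have "cinner (S$j) x = 0" for j
    using assms[of j] cnj_cinner[of x "S$j"] by simp
  with assms show ?thesis
    by (simp add: stiefel_tangent_def axis_def)
qed

lemma norm_second_fundamental_form_scaled_stiefel_le: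
  fixes S D :: "complex^'T::finite^'m::finite"
  assumes S: "S \<in> scaled_stiefel \<sigma>" and \<sigma>: "\<And>i. \<sigma> i > 0" and k: "\<And>i. \<sigma> k \<le> \<sigma> i"
    and D: "D \<in> tangent_space (scaled_stiefel \<sigma>) S"
  shows "norm (second_fundamental_form (scaled_stiefel \<sigma>) S D) \<le> (norm D)\<^sup>2 / \<sigma> k"
proof (rule power2_le_imp_le)
  have "D \<in> stiefel_tangent S"
    using D \<sigma> by (simp add: tangent_space_scaled_stiefel[OF S] less_imp_neq[THEN not_sym])
  then show "(norm (second_fundamental_form (scaled_stiefel \<sigma>) S D))\<^sup>2 \<le> ((norm D)\<^sup>2 / \<sigma> k)\<^sup>2"
    using sff_norm_sq_le[where \<sigma>=\<sigma> and k=k and D=D, OF \<sigma> k]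
    by (simp add: norm_second_fundamental_form_scaled_stiefel S \<sigma> power_divide flip: power_mult)
  show "0 \<le> (norm D)\<^sup>2 / \<sigma> k"
    using \<sigma>[of k] by simp
qed

lemma norm_second_fundamental_form_scaled_stiefel_attained:
  fixes S :: "complex^'T::finite^'m::finite"
  assumes S: "S \<in> scaled_stiefel \<sigma>" and \<sigma>: "\<And>i. \<sigma> i > 0" and card: "CARD('m) < CARD('T)"
  shows "\<exists>D\<in>tangent_space (scaled_stiefel \<sigma>) S. norm D = 1 \<and>
    norm (second_fundamental_form (scaled_stiefel \<sigma>) S D) = 1 / \<sigma> k"
proof -
  obtain x where x: "norm x = 1" "\<And>j. cinner x (S$j) = 0"
    using exists_unit_cinner_orthogonal[OF card] by blast
  have D: "axis k x \<in> stiefel_tangent S"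
    using x(2) by (rule axis_in_stiefel_tangent)
  have "(norm (second_fundamental_form (scaled_stiefel \<sigma>) S (axis k x)))\<^sup>2 = (1 / \<sigma> k)\<^sup>2"
    using \<sigma>[of k] by (simp add: norm_second_fundamental_form_scaled_stiefel[OF S \<sigma> D] sff_norm_sq_axis
        x(1) power_divide)
  then have "norm (second_fundamental_form (scaled_stiefel \<sigma>) S (axis k x)) = 1 / \<sigma> k"
    using \<sigma>[of k] by simp
  moreover have "axis k x \<in> tangent_space (scaled_stiefel \<sigma>) S"
    using D \<sigma> by (simp add: tangent_space_scaled_stiefel[OF S] less_imp_neq[THEN not_sym])
  ultimately show ?thesis
    using x(1) by (intro bexI[of _ "axis k x"]) (simp_all add: norm_axis)
qed

theorem mainTheorem7:
  fixes \<sigma> :: "'m::finite \<Rightarrow> real" and k :: 'm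
  assumes "CARD('m) < CARD('T::finite)"
    and "\<And>i. \<sigma> i > 0"
    and "\<And>i. \<sigma> k \<le> \<sigma> i"
  defines "M \<equiv> (gram_level_set (diag_mat (\<lambda>i. complex_of_real ((\<sigma> i)\<^sup>2))) :: (complex^'T^'m) set)"
  shows "(\<forall>S\<in>M. \<forall>\<Delta>\<in>tangent_space M S. inner \<Delta> \<Delta> = 1 \<longrightarrow>
            norm (second_fundamental_form M S \<Delta>) \<le> 1 / \<sigma> k)
       \<and> (\<forall>S\<in>M. \<exists>\<Delta>\<in>tangent_space M S. inner \<Delta> \<Delta> = 1 \<and>
            norm (second_fundamental_form M S \<Delta>) = 1 / \<sigma> k)
       \<and> (SUP (S, \<Delta>)\<in>{(S, \<Delta>). S \<in> M \<and> \<Delta> \<in> tangent_space M S \<and> inner \<Delta> \<Delta> = 1}.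
            norm (second_fundamental_form M S \<Delta>)) = 1 / \<sigma> k"
proof -
  have M: "M = scaled_stiefel \<sigma>"
    unfolding M_def by (rule gram_level_set_diag_mat)
  have bound: "norm (second_fundamental_form M S \<Delta>) \<le> 1 / \<sigma> k"
    if "S \<in> M" "\<Delta> \<in> tangent_space M S" "inner \<Delta> \<Delta> = 1" for S \<Delta>
    using norm_second_fundamental_form_scaled_stiefel_le[of S \<sigma> k \<Delta>] that assms(2,3)
    by (simp add: M power2_norm_eq_inner)
  have attained: "\<exists>\<Delta>\<in>tangent_space M S. inner \<Delta> \<Delta> = 1 \<and> norm (second_fundamental_form M S \<Delta>) = 1 / \<sigma> k"
    if "S \<in> M" for S
    using norm_second_fundamental_form_scaled_stiefel_attained[of S \<sigma> k] that assms(1,2)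
    by (simp add: M norm_eq_1)
  have "\<exists>S. S \<in> M"
    unfolding M using assms(1) by (intro scaled_stiefel_nonempty) simp
  with attained bound have "(SUP (S, \<Delta>)\<in>{(S, \<Delta>). S \<in> M \<and> \<Delta> \<in> tangent_space M S \<and> inner \<Delta> \<Delta> = 1}.
      norm (second_fundamental_form M S \<Delta>)) = 1 / \<sigma> k"
    by (intro cSup_eq_maximum) force+
  with bound attained show ?thesis
    by blast
qed

end
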